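(* Let $U=\{|z|<1/2\}$, $U^*=U\setminus\{0\}$, and let $u$ be a smooth real function on $U^*$ satisfying $\Delta u=e^{2u}$ on $U^*$ (where $\Delta=4\frac{\partial^2}{\partial z\partial\bar z}$), such that $v:=u+\ln|z|+\ln(-\ln|z|)$ extends to a continuous function on $U$. Let $\mathbf D=\{|z|<1/5\}$. Then $\int_{\mathbf D}|\nabla v|^2\,dx\,dy<+\infty$; more precisely, the pointwise gradient of $v$ on $\mathbf D\setminus\{0\}$ is square integrable and coincides, as a distribution on $\mathbf D$, with the distributional gradient of the continuous function $v$.
   Context: Integrals are with respect to Lebesgue measure on $\mathbb C\cong\mathbb R^2$, $z=x+iy$. *)

theory Defs
  imports "HOL-Analysis.Analysis"
begin

definition px :: "(complex \<Rightarrow> real) \<Rightarrow> complex \<Rightarrow> real" where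
  "px f z = deriv (\<lambda>t::real. f (z + complex_of_real t)) 0"

definition py :: "(complex \<Rightarrow> real) \<Rightarrow> complex \<Rightarrow> real" where
  "py f z = deriv (\<lambda>t::real. f (z + \<i> * complex_of_real t)) 0"

text \<open>Iterated partial derivative: True = d/dx, False = d/dy (applied from the head).\<close>
fun pd_iter :: "bool list \<Rightarrow> (complex \<Rightarrow> real) \<Rightarrow> complex \<Rightarrow> real" where
  "pd_iter [] f = f"
| "pd_iter (b # bs) f = (if b then px (pd_iter bs f) else py (pd_iter bs f))"

text \<open>C-infinity smoothness on a set: every iterated partial derivative is
  (real-Frechet) differentiable on S.\<close>
definition smooth_on :: "complex set \<Rightarrow> (complex \<Rightarrow> real) \<Rightarrow> bool" where
  "smooth_on S f \<longleftrightarrow> (\<forall>ds. pd_iter ds f differentiable_on S)"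

text \<open>Laplacian  \<Delta> = 4 d^2/dz dzbar = d^2/dx^2 + d^2/dy^2.\<close>
definition laplacian :: "(complex \<Rightarrow> real) \<Rightarrow> complex \<Rightarrow> real" where
  "laplacian f z = px (px f) z + py (py f) z"

definition test_fun :: "complex set \<Rightarrow> (complex \<Rightarrow> real) \<Rightarrow> bool" where
  "test_fun D \<phi> \<longleftrightarrow> smooth_on UNIV \<phi> \<and> compact (closure {z. \<phi> z \<noteq> 0})
      \<and> closure {z. \<phi> z \<noteq> 0} \<subseteq> D"

end

theory Submission
  imports Defs
begin

text \<open>Write \<open>h(s) = ln s / 2 + ln (- ln s / 2)\<close>, so that \<open>v = u + h(\<bar>z\<bar>\<^sup>2)\<close>. The function
  \<open>- h(\<bar>z\<bar>\<^sup>2)\<close> is the hyperbolic cusp, itself a solution of \<open>\<Delta>w = e\<^sup>2\<^sup>w\<close>; subtracting the two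
  equations gives \<open>\<Delta>v = e\<^sup>-\<^sup>2\<^sup>h (e\<^sup>2\<^sup>v - 1)\<close>, hence \<open>v \<Delta>v \<ge> 0\<close>. For a cutoff \<open>\<rho>\<close> supported in the
  punctured disc, integrating \<open>div (\<rho>\<^sup>2 v \<nabla>v)\<close> along lines gives
  \<open>\<integral> \<rho>\<^sup>2 v \<Delta>v + \<rho>\<^sup>2 \<bar>\<nabla>v\<bar>\<^sup>2 + 2 \<rho> v \<nabla>\<rho>\<cdot>\<nabla>v = 0\<close>, and Young's inequality yields
  \<open>\<integral> \<rho>\<^sup>2 \<bar>\<nabla>v\<bar>\<^sup>2 \<le> 4 (sup \<bar>v\<bar>)\<^sup>2 \<integral> \<bar>\<nabla>\<rho>\<bar>\<^sup>2\<close>, where \<open>v\<close> is bounded because it is continuous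
  at the origin. In the plane, cutoffs shrinking to the origin can be chosen with bounded Dirichlet
  energy, so Fatou's lemma gives \<open>\<nabla>v \<in> L\<^sup>2\<close>. The distributional identity is integration by
  parts along horizontal and vertical lines, almost all of which miss the origin.\<close>

lemma norm_line_sq:
  fixes z d :: complex
  shows "(norm (z + d * of_real t))\<^sup>2 = (norm z)\<^sup>2 + 2 * t * (d \<bullet> z) + t\<^sup>2 * (norm d)\<^sup>2"
  unfolding cmod_power2 by (simp add: inner_complex_def power2_eq_square algebra_simps)

lemma inner_line:
  fixes z d :: complex
  shows "d \<bullet> (z + d * of_real t) = d \<bullet> z + t * (norm d)\<^sup>2"
  unfolding cmod_power2 by (simp add: inner_complex_def algebra_simps power2_eq_square)

lemma norm_orthogonal_line_sq:
  fixes c d :: complex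
  assumes "c \<bullet> d = 0" "norm d = 1"
  shows "(norm (c + d * of_real t))\<^sup>2 = (norm c)\<^sup>2 + t\<^sup>2"
  using assms by (simp add: norm_line_sq inner_commute)

lemma has_real_derivative_norm_line_sq:
  fixes z d :: complex
  assumes "norm d = 1"
  shows "((\<lambda>t. (norm (z + d * of_real t))\<^sup>2) has_real_derivative 2 * (d \<bullet> (z + d * of_real t0))) (at t0)"
proof -
  have "d \<bullet> (z + d * of_real t0) = d \<bullet> z + t0"
    using assms by (simp add: inner_line)
  then show ?thesis
    unfolding norm_line_sq assms by (auto intro!: derivative_eq_intros)
qed

lemma continuous_on_line: "continuous_on S (\<lambda>t. z + d * of_real t :: complex)"
  by (intro continuous_intros)

lemma open_line_preimage: "open S \<Longrightarrow> open {t. z + d * of_real t \<in> (S :: complex set)}"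
  using open_vimage[OF _ continuous_on_line] by (auto simp: vimage_def)

lemma finite_preimage_plus_square: "finite V \<Longrightarrow> finite {t :: real. a + t\<^sup>2 \<in> V}"
proof -
  assume V: "finite V"
  have "{t. a + t\<^sup>2 \<in> V} \<subseteq> (\<Union>x\<in>V. {sqrt (x - a), - sqrt (x - a)})"
  proof
    fix t assume "t \<in> {t. a + t\<^sup>2 \<in> V}"
    moreover have "t = sqrt (t\<^sup>2) \<or> t = - sqrt (t\<^sup>2)" by (cases "t \<ge> 0") auto
    ultimately show "t \<in> (\<Union>x\<in>V. {sqrt (x - a), - sqrt (x - a)})" by force
  qed
  then show ?thesis by (rule finite_subset) (use V in auto)
qed

section \<open>Lebesgue measure on the plane and integration along lines\<close>

lemma measurable_Complex_pair [measurable]: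
  "(\<lambda>(x, y). Complex x y) \<in> borel_measurable (lborel \<Otimes>\<^sub>M lborel)"
proof -
  have "(\<lambda>p::real \<times> real. of_real (fst p) + \<i> * of_real (snd p) :: complex)
      \<in> borel_measurable (lborel \<Otimes>\<^sub>M lborel)"
    by measurable
  then show ?thesis by (simp add: Complex_eq case_prod_beta')
qed

lemma distr_lborel_pair_Complex:
  "distr (lborel \<Otimes>\<^sub>M lborel) borel (\<lambda>(x, y). Complex x y) = (lborel :: complex measure)"
proof (rule lborel_eqI[symmetric])
  fix l u :: complex
  assume lu: "\<And>b. b \<in> Basis \<Longrightarrow> l \<bullet> b \<le> u \<bullet> b"
  have le: "Re l \<le> Re u" "Im l \<le> Im u"
    using lu[of 1] lu[of \<i>] by (auto simp: Basis_complex_def)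
  have "(\<lambda>(x, y). Complex x y) -` box l u \<inter> space (lborel \<Otimes>\<^sub>M lborel)
      = box (Re l) (Re u) \<times> box (Im l) (Im u)"
    by (auto simp: box_def Basis_complex_def space_pair_measure)
  with le show "emeasure (distr (lborel \<Otimes>\<^sub>M lborel) borel (\<lambda>(x, y). Complex x y)) (box l u)
      = (\<Prod>b\<in>Basis. (u - l) \<bullet> b)"
    by (simp add: emeasure_distr lborel.emeasure_pair_measure_Times Basis_complex_def
        ennreal_mult[symmetric])
qed simp

lemma integrable_lborel_Complex_pair:
  fixes F :: "complex \<Rightarrow> real"
  assumes "integrable lborel F"
  shows "integrable (lborel \<Otimes>\<^sub>M lborel) (\<lambda>(x, y). F (Complex x y))"
    and "integral\<^sup>L lborel F = integral\<^sup>L (lborel \<Otimes>\<^sub>M lborel) (\<lambda>(x, y). F (Complex x y))"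
proof -
  have [measurable]: "F \<in> borel_measurable borel" using assms by auto
  show "integrable (lborel \<Otimes>\<^sub>M lborel) (\<lambda>(x, y). F (Complex x y))"
    using assms unfolding distr_lborel_pair_Complex[symmetric]
    by (subst (asm) integrable_distr_eq) (auto simp: split_beta')
  show "integral\<^sup>L lborel F = integral\<^sup>L (lborel \<Otimes>\<^sub>M lborel) (\<lambda>(x, y). F (Complex x y))"
    unfolding distr_lborel_pair_Complex[symmetric]
    by (subst integral_distr) (auto simp: split_beta')
qed

text \<open>Only the two coordinate directions are needed, so Fubini suffices and no rotation
  invariance of Lebesgue measure is required.\<close>
lemma integral_eq_0_if_line_integrals_eq_0:
  fixes F :: "complex \<Rightarrow> real"
  assumes d: "d \<in> {1, \<i>}" and F: "integrable lborel F"
    and lines: "\<And>c. c \<bullet> d = 0 \<Longrightarrow> c \<noteq> 0 \<Longrightarrow> ((\<lambda>t. F (c + d * of_real t)) has_integral 0) UNIV"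
  shows "integral\<^sup>L lborel F = 0"
proof -
  note pair = integrable_lborel_Complex_pair[OF F]
  have line_0: "integral\<^sup>L lborel (\<lambda>t. F (c + d * of_real t)) = 0" if "c \<bullet> d = 0" "c \<noteq> 0"
    "integrable lborel (\<lambda>t. F (c + d * of_real t))" for c
    using has_integral_unique[OF has_integral_integral_lborel[OF that(3)] lines[OF that(1,2)]] .
  from d consider "d = 1" | "d = \<i>" by blast
  then show ?thesis
  proof cases
    case 1
    have "integral\<^sup>L lborel F = (\<integral>y. (\<integral>x. F (Complex x y) \<partial>lborel) \<partial>lborel)"
      using pair lborel_pair.integral_snd[of "\<lambda>x y. F (Complex x y)"] by simp
    also have "\<dots> = 0"
    proof (rule integral_eq_zero_AE)
      show "AE y in lborel. (\<integral>x. F (Complex x y) \<partial>lborel) = 0"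
        using lborel_pair.AE_integrable_snd[of "\<lambda>x y. F (Complex x y)", OF pair(1)]
          AE_lborel_singleton[of 0]
      proof eventually_elim
        case (elim y)
        have "(\<lambda>x. F (Complex x y)) = (\<lambda>t. F (Complex 0 y + d * of_real t))"
          unfolding 1 by (intro ext arg_cong[where f=F]) (simp add: complex_eq_iff)
        with elim show ?case using line_0[of "Complex 0 y"] 1 by (simp add: inner_complex_def Complex_eq_0)
      qed
    qed
    finally show ?thesis .
  next
    case 2
    have "integral\<^sup>L lborel F = (\<integral>x. (\<integral>y. F (Complex x y) \<partial>lborel) \<partial>lborel)"
      using pair lborel_pair.integral_fst[of "\<lambda>x y. F (Complex x y)"] by simp
    also have "\<dots> = 0"
    proof (rule integral_eq_zero_AE)
      show "AE x in lborel. (\<integral>y. F (Complex x y) \<partial>lborel) = 0"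
        using lborel_pair.AE_integrable_fst[of "\<lambda>x y. F (Complex x y)", OF pair(1)]
          AE_lborel_singleton[of 0]
      proof eventually_elim
        case (elim x)
        have "(\<lambda>y. F (Complex x y)) = (\<lambda>t. F (Complex x 0 + d * of_real t))"
          unfolding 2 by (intro ext arg_cong[where f=F]) (simp add: complex_eq_iff)
        with elim show ?case using line_0[of "Complex x 0"] 2 by (simp add: inner_complex_def Complex_eq_0)
      qed
    qed
    finally show ?thesis .
  qed
qed

lemma integral_eq_0_if_derivative_along_lines:
  fixes W F :: "complex \<Rightarrow> real"
  assumes d: "d \<in> {1, \<i>}" and F: "integrable lborel F"
    and outside: "\<And>z. 1 \<le> norm z \<Longrightarrow> W z = 0 \<and> F z = 0"
    and lines: "\<And>c. c \<bullet> d = 0 \<Longrightarrow> c \<noteq> 0 \<Longrightarrow> \<exists>S. finite S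
      \<and> continuous_on UNIV (\<lambda>t. W (c + d * of_real t))
      \<and> (\<forall>t. t \<notin> S \<longrightarrow> ((\<lambda>t. W (c + d * of_real t)) has_real_derivative F (c + d * of_real t)) (at t))"
  shows "integral\<^sup>L lborel F = 0"
proof (rule integral_eq_0_if_line_integrals_eq_0[OF d F])
  fix c assume c: "c \<bullet> d = 0" "c \<noteq> 0"
  obtain S where S: "finite S" and cont: "continuous_on UNIV (\<lambda>t. W (c + d * of_real t))"
    and deriv: "\<And>t. t \<notin> S \<Longrightarrow> ((\<lambda>t. W (c + d * of_real t)) has_real_derivative F (c + d * of_real t)) (at t)"
    using lines[OF c] by blast
  have far: "1 \<le> norm (c + d * of_real t)" if "1 \<le> \<bar>t\<bar>" for t
  proof -
    have "1 \<le> \<bar>t\<bar>\<^sup>2" using that by (rule one_le_power)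
    then have "1\<^sup>2 \<le> (norm c)\<^sup>2 + t\<^sup>2" by (simp add: add_increasing)
    also have "\<dots> = (norm (c + d * of_real t))\<^sup>2"
      using norm_orthogonal_line_sq[OF c(1)] d by auto
    finally show ?thesis by (rule power2_le_imp_le) simp
  qed
  have "((\<lambda>t. F (c + d * of_real t)) has_integral W (c + d * of_real 1) - W (c + d * of_real (-1))) {-1..1}"
    using S deriv cont
    by (intro fundamental_theorem_of_calculus_interior_strong[where S=S])
       (auto simp: has_real_derivative_iff_has_vector_derivative[symmetric] intro: continuous_on_subset)
  then have "((\<lambda>t. F (c + d * of_real t)) has_integral 0) {-1..1}"
    using outside far[of 1] far[of "-1"] by simp
  then show "((\<lambda>t. F (c + d * of_real t)) has_integral 0) UNIV"
    by (rule has_integral_on_superset) (use outside far in auto)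
qed

lemma integrable_mult_bounded:
  fixes f g :: "'a \<Rightarrow> real"
  assumes f: "integrable M f" and g: "g \<in> borel_measurable M" and bound: "\<And>x. \<bar>g x\<bar> \<le> C"
  shows "integrable M (\<lambda>x. f x * g x)"
proof (rule Bochner_Integration.integrable_bound[where f="\<lambda>x. C * f x"])
  show "integrable M (\<lambda>x. C * f x)" using f by simp
  show "(\<lambda>x. f x * g x) \<in> borel_measurable M" using f g by measurable
  have "\<bar>f x\<bar> * \<bar>g x\<bar> \<le> C * \<bar>f x\<bar>" for x
    using mult_left_mono[OF bound[of x] abs_ge_zero[of "f x"]] by (simp add: mult.commute)
  moreover have "0 \<le> C" using bound by (meson abs_ge_zero order_trans)
  ultimately show "AE x in M. norm (f x * g x) \<le> norm (C * f x)"
    by (simp add: abs_mult)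
qed

lemma set_integrable_mult_square_bound:
  fixes f g G :: "'a \<Rightarrow> real"
  assumes G: "set_integrable M S G" and g: "set_integrable M S (\<lambda>x. (g x)\<^sup>2)"
    and fg: "set_borel_measurable M S (\<lambda>x. f x * g x)"
    and le: "\<And>x. x \<in> S \<Longrightarrow> (f x)\<^sup>2 \<le> G x"
  shows "set_integrable M S (\<lambda>x. f x * g x)"
  unfolding set_integrable_def
proof (rule Bochner_Integration.integrable_bound)
  show "integrable M (\<lambda>x. indicator S x *\<^sub>R (G x + (g x)\<^sup>2))"
    using G g by (simp add: set_integrable_def distrib_left)
  show "(\<lambda>x. indicator S x *\<^sub>R (f x * g x)) \<in> borel_measurable M"
    using fg by (simp add: set_borel_measurable_def)
  show "AE x in M. norm (indicator S x *\<^sub>R (f x * g x)) \<le> norm (indicator S x *\<^sub>R (G x + (g x)\<^sup>2))"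
  proof (rule AE_I2)
    fix x
    show "norm (indicator S x *\<^sub>R (f x * g x)) \<le> norm (indicator S x *\<^sub>R (G x + (g x)\<^sup>2))"
    proof (cases "x \<in> S")
      case True
      have "2 * (\<bar>f x\<bar> * \<bar>g x\<bar>) \<le> (f x)\<^sup>2 + (g x)\<^sup>2"
        using sum_squares_bound[of "\<bar>f x\<bar>" "\<bar>g x\<bar>"] by (simp add: mult.assoc)
      moreover have "0 \<le> \<bar>f x\<bar> * \<bar>g x\<bar>" by simp
      ultimately have "\<bar>f x * g x\<bar> \<le> G x + (g x)\<^sup>2"
        using le[OF True] unfolding abs_mult by linarith
      then show ?thesis using True order_trans[OF _ abs_ge_self] by simp
    qed simp
  qed
qed

lemma set_integrable_if_cutoff_integrals_bounded:
  fixes f :: "'a \<Rightarrow> real" and g :: "nat \<Rightarrow> 'a \<Rightarrow> real"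
  assumes f: "set_borel_measurable M S f" "\<And>x. x \<in> S \<Longrightarrow> 0 \<le> f x"
    and g: "\<And>n. integrable M (g n)" "\<And>n x. 0 \<le> g n x"
    and lim: "\<And>x. x \<in> S \<Longrightarrow> (\<lambda>n. g n x) \<longlonglongrightarrow> f x"
    and bound: "\<And>n. integral\<^sup>L M (g n) \<le> K"
  shows "set_integrable M S f"
proof -
  have [measurable]: "g n \<in> borel_measurable M" for n
    using g(1) by (rule borel_measurable_integrable)
  have "(\<integral>\<^sup>+x. ennreal (indicator S x * f x) \<partial>M) \<le> (\<integral>\<^sup>+x. liminf (\<lambda>n. ennreal (g n x)) \<partial>M)"
  proof (intro nn_integral_mono)
    fix x
    show "ennreal (indicator S x * f x) \<le> liminf (\<lambda>n. ennreal (g n x))"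
    proof (cases "x \<in> S")
      case True
      then have "liminf (\<lambda>n. ennreal (g n x)) = ennreal (f x)"
        by (intro lim_imp_Liminf tendsto_ennrealI lim) simp_all
      with True show ?thesis by simp
    qed simp
  qed
  also have "\<dots> \<le> liminf (\<lambda>n. \<integral>\<^sup>+x. ennreal (g n x) \<partial>M)"
    by (rule nn_integral_liminf) measurable
  also have "\<dots> \<le> limsup (\<lambda>n. \<integral>\<^sup>+x. ennreal (g n x) \<partial>M)"
    by (rule Liminf_le_Limsup) simp
  also have "\<dots> \<le> ennreal K"
  proof (rule Limsup_bounded, intro always_eventually allI)
    fix n
    have "(\<integral>\<^sup>+x. ennreal (g n x) \<partial>M) = ennreal (integral\<^sup>L M (g n))"
      by (rule nn_integral_eq_integral[OF g(1)]) (simp add: g(2))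
    then show "(\<integral>\<^sup>+x. ennreal (g n x) \<partial>M) \<le> ennreal K"
      using bound[of n] by (simp add: ennreal_leI)
  qed
  finally have "(\<integral>\<^sup>+x. ennreal (indicator S x * f x) \<partial>M) < \<infinity>"
    by (metis ennreal_less_top infinity_ennreal_def le_less_trans)
  moreover have "(\<lambda>x. indicator S x * f x) \<in> borel_measurable M"
    using f(1) by (simp add: set_borel_measurable_def)
  moreover have "AE x in M. 0 \<le> indicator S x * f x"
    using f(2) by (intro AE_I2) (simp add: indicator_def)
  ultimately have "integrable M (\<lambda>x. indicator S x * f x)"
    by (intro integrableI_nonneg)
  then show ?thesis by (simp add: set_integrable_def)
qed

lemma young_cross_term:
  fixes w r a b p c :: real
  shows "- (2 * w * r * (a * p + b * c)) \<le> (a\<^sup>2 + b\<^sup>2) * r\<^sup>2 / 2 + 2 * w\<^sup>2 * (p\<^sup>2 + c\<^sup>2)"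
proof -
  have "(a\<^sup>2 + b\<^sup>2) * r\<^sup>2 / 2 + 2 * w\<^sup>2 * (p\<^sup>2 + c\<^sup>2) + 2 * w * r * (a * p + b * c)
      = ((r * a + 2 * w * p)\<^sup>2 + (r * b + 2 * w * c)\<^sup>2) / 2"
    by (simp add: power2_eq_square field_simps)
  moreover have "0 \<le> ((r * a + 2 * w * p)\<^sup>2 + (r * b + 2 * w * c)\<^sup>2) / 2" by simp
  ultimately show ?thesis by linarith
qed

definition dir_deriv :: "complex \<Rightarrow> (complex \<Rightarrow> real) \<Rightarrow> complex \<Rightarrow> real" where
  "dir_deriv d f z = deriv (\<lambda>t. f (z + d * of_real t)) 0"

lemma px_eq_dir_deriv: "px = dir_deriv 1"
  by (simp add: fun_eq_iff px_def dir_deriv_def)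

lemma py_eq_dir_deriv: "py = dir_deriv \<i>"
  by (simp add: fun_eq_iff py_def dir_deriv_def)

lemma dir_deriv_eqI:
  assumes "((\<lambda>t. f (z + d * of_real t)) has_real_derivative D) (at t0)"
  shows "dir_deriv d f (z + d * of_real t0) = D"
proof -
  have "((\<lambda>t. f (z + d * of_real (t + t0))) has_real_derivative D) (at 0)"
    using DERIV_shift[of "\<lambda>t. f (z + d * of_real t)" D 0 t0] assms by simp
  moreover have "(\<lambda>t. f (z + d * of_real t0 + d * of_real t)) = (\<lambda>t. f (z + d * of_real (t + t0)))"
    by (simp add: algebra_simps)
  ultimately show ?thesis unfolding dir_deriv_def by (simp add: DERIV_imp_deriv)
qed

lemma has_real_derivative_dir_deriv:
  assumes "f differentiable (at (z + d * of_real t0))"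
  shows "((\<lambda>t. f (z + d * of_real t)) has_real_derivative dir_deriv d f (z + d * of_real t0)) (at t0)"
proof -
  have "(\<lambda>t. z + d * of_real t) differentiable (at t0)"
    by (rule differentiableI) (auto intro!: derivative_eq_intros)
  from differentiable_chain_at[OF this, of f] assms
  have "(f \<circ> (\<lambda>t. z + d * of_real t)) differentiable (at t0)" by simp
  then have "(\<lambda>t. f (z + d * of_real t)) differentiable (at t0)"
    by (simp add: o_def)
  then have "((\<lambda>t. f (z + d * of_real t)) has_real_derivative deriv (\<lambda>t. f (z + d * of_real t)) t0) (at t0)"
    by (simp add: DERIV_deriv_iff_real_differentiable)
  with dir_deriv_eqI show ?thesis by metis
qed

lemma has_real_derivative_line_if_locally_0:
  fixes f :: "complex \<Rightarrow> real"
  assumes "open S" "z + d * of_real t0 \<in> S" "\<And>w. w \<in> S \<Longrightarrow> f w = 0"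
  shows "((\<lambda>t. f (z + d * of_real t)) has_real_derivative 0) (at t0)"
  by (rule has_field_derivative_transform_within_open[of "\<lambda>_. 0" 0 t0 "{t. z + d * of_real t \<in> S}"])
     (use assms in \<open>auto intro: open_line_preimage\<close>)

lemma dir_deriv_eq_0_if_locally_0:
  assumes "open S" "z \<in> S" "\<And>w. w \<in> S \<Longrightarrow> f w = 0"
  shows "dir_deriv d f z = 0"
  using dir_deriv_eqI[OF has_real_derivative_line_if_locally_0[of S z d 0 f]] assms by simp

lemma dir_deriv_funpow_eq_pd_iter:
  assumes "d \<in> {1, \<i>}"
  shows "(dir_deriv d ^^ n) f = pd_iter (replicate n (d = 1)) f"
proof -
  have "\<i> \<noteq> (1 :: complex)" by (simp add: complex_eq_iff)
  with assms show ?thesis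
    by (induction n) (auto simp: px_eq_dir_deriv py_eq_dir_deriv)
qed

lemma smooth_on_differentiable_dir_deriv:
  assumes "smooth_on S f" "open S" "z \<in> S" "d \<in> {1, \<i>}"
  shows "(dir_deriv d ^^ n) f differentiable (at z)"
  using assms unfolding dir_deriv_funpow_eq_pd_iter[OF assms(4)] smooth_on_def
  by (auto simp: differentiable_on_eq_differentiable_at)

lemma test_fun_differentiable:
  assumes "test_fun D \<phi>" "d \<in> {1, \<i>}"
  shows "\<phi> differentiable (at z)" and "dir_deriv d \<phi> differentiable (at z)"
  using smooth_on_differentiable_dir_deriv[of UNIV \<phi> z d 0]
    smooth_on_differentiable_dir_deriv[of UNIV \<phi> z d 1] assms
  by (simp_all add: test_fun_def)

lemma test_fun_continuous:
  assumes "test_fun D \<phi>" "d \<in> {1, \<i>}"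
  shows "continuous_on UNIV \<phi>" and "continuous_on UNIV (dir_deriv d \<phi>)"
  using test_fun_differentiable[OF assms]
  by (auto intro: continuous_at_imp_continuous_on differentiable_imp_continuous_within)

lemma test_fun_vanishes:
  assumes "z \<notin> closure {z. \<phi> z \<noteq> 0}"
  shows "\<phi> z = 0" and "dir_deriv d \<phi> z = 0"
proof -
  have zero: "\<phi> w = 0" if "w \<in> - closure {z. \<phi> z \<noteq> 0}" for w
  proof (rule ccontr)
    assume "\<phi> w \<noteq> 0"
    then have "w \<in> closure {z. \<phi> z \<noteq> 0}" by (intro closure_subset[THEN subsetD]) simp
    with that show False by simp
  qed
  show "\<phi> z = 0" by (rule zero) (use assms in simp)
  show "dir_deriv d \<phi> z = 0"
    by (rule dir_deriv_eq_0_if_locally_0[OF open_Compl[OF closed_closure] _ zero]) (use assms in simp)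
qed

section \<open>The cusp profile\<close>

definition cusp_profile :: "real \<Rightarrow> real" where
  "cusp_profile s = ln s / 2 + ln (- ln s / 2)"

definition cusp_profile' :: "real \<Rightarrow> real" where
  "cusp_profile' s = 1 / (2 * s) + 1 / (s * ln s)"

definition cusp_profile'' :: "real \<Rightarrow> real" where
  "cusp_profile'' s = - 1 / (2 * s\<^sup>2) - (ln s + 1) / (s * ln s)\<^sup>2"

lemma has_real_derivative_cusp_profile:
  assumes "0 < s" "s < 1"
  shows "(cusp_profile has_real_derivative cusp_profile' s) (at s)"
proof -
  have "ln s < 0" using assms by simp
  then have "((\<lambda>s. ln s / 2 + ln (- ln s / 2)) has_real_derivative
      (1 / s) / 2 + (1 / (- ln s / 2)) * (- (1 / s) / 2)) (at s)"
    using assms by (auto intro!: derivative_eq_intros)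
  then show ?thesis unfolding cusp_profile_def[abs_def]
    by (rule DERIV_cong) (use assms \<open>ln s < 0\<close> in \<open>simp add: cusp_profile'_def field_simps\<close>)
qed

lemma has_real_derivative_cusp_profile':
  assumes "0 < s" "s < 1"
  shows "(cusp_profile' has_real_derivative cusp_profile'' s) (at s)"
proof -
  have "ln s < 0" using assms by simp
  then have "((\<lambda>s. 1 / (2 * s) + 1 / (s * ln s)) has_real_derivative
      - (2 / (2 * s)\<^sup>2) - (1 * ln s + s * (1 / s)) / (s * ln s)\<^sup>2) (at s)"
    using assms by (auto intro!: derivative_eq_intros simp: power2_eq_square) (simp add: minus_divide_left)
  then show ?thesis unfolding cusp_profile'_def[abs_def]
    by (rule DERIV_cong) (use assms in \<open>simp add: cusp_profile''_def power2_eq_square\<close>)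
qed

text \<open>With \<open>h = cusp_profile\<close>, the function \<open>h (\<bar>z\<bar>\<^sup>2) = ln \<bar>z\<bar> + ln (- ln \<bar>z\<bar>)\<close> has Laplacian
  \<open>4 (h' + s h'')\<close> at \<open>s = \<bar>z\<bar>\<^sup>2\<close>, so this identity says that \<open>- h (\<bar>z\<bar>\<^sup>2)\<close> solves the same
  equation \<open>\<Delta>w = e\<^sup>2\<^sup>w\<close> as \<open>u\<close>.\<close>
lemma cusp_profile_equation:
  assumes "0 < s" "s < 1"
  shows "4 * (cusp_profile' s + s * cusp_profile'' s) = - exp (- 2 * cusp_profile s)"
proof -
  have L: "ln s < 0" using assms by simp
  have "exp (- 2 * cusp_profile s) = inverse (exp (ln s)) * inverse (exp (ln (- ln s / 2)) ^ 2)"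
    by (simp add: cusp_profile_def exp_add[symmetric] exp_minus[symmetric] exp_of_nat_mult[symmetric]
        algebra_simps)
  also have "\<dots> = 4 / (s * (ln s)\<^sup>2)"
    using assms L by (simp add: inverse_eq_divide power_divide)
  finally have "exp (- 2 * cusp_profile s) = 4 / (s * (ln s)\<^sup>2)" .
  moreover have "4 * (cusp_profile' s + s * cusp_profile'' s) = - 4 / (s * (ln s)\<^sup>2)"
    using assms L by (simp add: cusp_profile'_def cusp_profile''_def field_simps power2_eq_square)
  ultimately show ?thesis by simp
qed

section \<open>Cutoff functions\<close>

definition trapezoid :: "real \<Rightarrow> real \<Rightarrow> real \<Rightarrow> real \<Rightarrow> real \<Rightarrow> real" where
  "trapezoid a b c d s = max 0 (min 1 (min ((s - a) / (b - a)) ((d - s) / (d - c))))"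

definition trapezoid' :: "real \<Rightarrow> real \<Rightarrow> real \<Rightarrow> real \<Rightarrow> real \<Rightarrow> real" where
  "trapezoid' a b c d s =
    (if a < s \<and> s < b then 1 / (b - a) else if c < s \<and> s < d then - 1 / (d - c) else 0)"

lemma borel_measurable_trapezoid' [measurable]: "trapezoid' a b c d \<in> borel_measurable borel"
  unfolding trapezoid'_def[abs_def] by measurable

context
  fixes a b c d :: real
  assumes ab: "a < b" and bc: "b \<le> c" and cd: "c < d"
begin

lemma trapezoid_eq_0:
  assumes "s \<le> a \<or> d \<le> s"
  shows "trapezoid a b c d s = 0"
proof -
  have "(s - a) / (b - a) \<le> 0 \<or> (d - s) / (d - c) \<le> 0"
    using assms ab cd by (auto simp: divide_le_0_iff)
  then show ?thesis unfolding trapezoid_def by (smt (verit))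
qed

lemma trapezoid_eq_1:
  assumes "b \<le> s" "s \<le> c"
  shows "trapezoid a b c d s = 1"
proof -
  have "1 \<le> (s - a) / (b - a)" "1 \<le> (d - s) / (d - c)"
    using assms ab cd by (simp_all add: le_divide_eq)
  then show ?thesis unfolding trapezoid_def by linarith
qed

lemma trapezoid_eq_ramp_up:
  assumes "a \<le> s" "s \<le> b"
  shows "trapezoid a b c d s = (s - a) / (b - a)"
proof -
  have "0 \<le> (s - a) / (b - a)" "(s - a) / (b - a) \<le> 1" "1 \<le> (d - s) / (d - c)"
    using assms ab bc cd by (simp_all add: le_divide_eq divide_le_eq)
  then show ?thesis unfolding trapezoid_def by linarith
qed

lemma trapezoid_eq_ramp_down:
  assumes "c \<le> s" "s \<le> d"
  shows "trapezoid a b c d s = (d - s) / (d - c)"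
proof -
  have "0 \<le> (d - s) / (d - c)" "(d - s) / (d - c) \<le> 1" "1 \<le> (s - a) / (b - a)"
    using assms ab bc cd by (simp_all add: le_divide_eq divide_le_eq)
  then show ?thesis unfolding trapezoid_def by linarith
qed

lemma trapezoid'_eq_0: "s \<le> a \<or> d \<le> s \<Longrightarrow> trapezoid' a b c d s = 0"
  using ab bc cd by (auto simp: trapezoid'_def)

lemma continuous_on_trapezoid: "continuous_on S (trapezoid a b c d)"
  unfolding trapezoid_def[abs_def] using ab cd by (intro continuous_intros) auto

lemma has_real_derivative_trapezoid:
  assumes "s \<notin> {a, b, c, d}"
  shows "(trapezoid a b c d has_real_derivative trapezoid' a b c d s) (at s)"
proof -
  have affine: "(trapezoid a b c d has_real_derivative trapezoid' a b c d s) (at s)"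
    if "(g has_real_derivative trapezoid' a b c d s) (at s)" "open I" "s \<in> I"
       "\<And>x. x \<in> I \<Longrightarrow> trapezoid a b c d x = g x" for g I
    using has_field_derivative_transform_within_open[OF that(1-3)] that(4) by metis
  consider "s < a" | "a < s" "s < b" | "b < s" "s < c" | "c < s" "s < d" | "d < s"
    using assms by fastforce
  then show ?thesis
  proof cases
    case 1
    then show ?thesis using ab bc
      by (intro affine[of "\<lambda>_. 0" "{..<a}"]) (auto simp: trapezoid'_def trapezoid_eq_0)
  next
    case 2
    then show ?thesis using bc
      by (intro affine[of "\<lambda>x. (x - a) / (b - a)" "{a<..<b}"])
         (auto intro!: derivative_eq_intros simp: trapezoid'_def trapezoid_eq_ramp_up)
  next
    case 3
    then show ?thesis using ab
      by (intro affine[of "\<lambda>_. 1" "{b<..<c}"]) (auto simp: trapezoid'_def trapezoid_eq_1)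
  next
    case 4
    have "((\<lambda>x. (d - x) / (d - c)) has_real_derivative (0 - 1) / (d - c)) (at s)"
      by (intro DERIV_cdivide derivative_intros)
    with 4 show ?thesis using ab bc
      by (intro affine[of "\<lambda>x. (d - x) / (d - c)" "{c<..<d}"])
         (auto simp: trapezoid'_def trapezoid_eq_ramp_down)
  next
    case 5
    then show ?thesis using ab bc cd
      by (intro affine[of "\<lambda>_. 0" "{d<..}"]) (auto simp: trapezoid'_def trapezoid_eq_0)
  qed
qed

end

text \<open>\<open>cutoff e\<close> equals \<open>1\<close> on \<open>2e \<le> \<bar>z\<bar>\<^sup>2 \<le> 1/25\<close> and vanishes unless \<open>e < \<bar>z\<bar>\<^sup>2 < 1/16\<close>;
  \<open>cutoff_deriv e d\<close> is its derivative in direction \<open>d\<close>, away from the four corners.\<close>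
definition cutoff :: "real \<Rightarrow> complex \<Rightarrow> real" where
  "cutoff e z = trapezoid e (2 * e) (1/25) (1/16) ((norm z)\<^sup>2)"

definition cutoff_deriv :: "real \<Rightarrow> complex \<Rightarrow> complex \<Rightarrow> real" where
  "cutoff_deriv e d z = trapezoid' e (2 * e) (1/25) (1/16) ((norm z)\<^sup>2) * 2 * (d \<bullet> z)"

lemma measure_cball_complex: "0 \<le> r \<Longrightarrow> measure lborel (cball (z :: complex) r) = pi * r\<^sup>2"
  by (simp add: content_cball unit_ball_vol_2)

context
  fixes e :: real
  assumes e: "0 < e" "2 * e \<le> 1/25"
begin

lemma cutoff_eq_1: "2 * e \<le> (norm z)\<^sup>2 \<Longrightarrow> (norm z)\<^sup>2 \<le> 1/25 \<Longrightarrow> cutoff e z = 1"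
  using e by (simp add: cutoff_def trapezoid_eq_1)

lemma cutoff_vanishes:
  assumes "z \<notin> cball 0 (1/4) - ball 0 (sqrt e)"
  shows "cutoff e z = 0" "cutoff_deriv e d z = 0"
proof -
  have "(norm z)\<^sup>2 \<le> e \<or> 1/16 \<le> (norm z)\<^sup>2"
  proof (cases "norm z < sqrt e")
    case True
    then have "(norm z)\<^sup>2 \<le> (sqrt e)\<^sup>2" by (intro power_mono) auto
    then show ?thesis using e by simp
  next
    case False
    with assms have "1/4 < norm z" by simp
    then have "(1/4)\<^sup>2 \<le> (norm z)\<^sup>2" by (intro power_mono) auto
    then show ?thesis by (simp add: power2_eq_square)
  qed
  then show "cutoff e z = 0" "cutoff_deriv e d z = 0"
    using e by (simp_all add: cutoff_def cutoff_deriv_def trapezoid_eq_0 trapezoid'_eq_0)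
qed

lemma cutoff_support_subset: "cball 0 (1/4) - ball 0 (sqrt e) \<subseteq> ball 0 (1/2) - {0}"
  using e by auto

lemma compact_cutoff_support: "compact (cball 0 (1/4) - ball (0 :: complex) (sqrt e))"
  by (intro compact_diff) auto

lemma continuous_on_cutoff: "continuous_on S (cutoff e)"
  unfolding cutoff_def[abs_def]
  by (rule continuous_on_compose2[OF continuous_on_trapezoid]) (use e in \<open>auto intro!: continuous_intros\<close>)

lemma has_real_derivative_cutoff_line:
  assumes "norm d = 1" "(norm (z + d * of_real t0))\<^sup>2 \<notin> {e, 2 * e, 1/25, 1/16}"
  shows "((\<lambda>t. cutoff e (z + d * of_real t)) has_real_derivative cutoff_deriv e d (z + d * of_real t0)) (at t0)"
  unfolding cutoff_def cutoff_deriv_def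
  using DERIV_chain2[OF has_real_derivative_trapezoid has_real_derivative_norm_line_sq[OF assms(1)]]
    e assms(2)
  by (simp add: mult.assoc)

lemma cutoff_gradient_sq_le:
  "(cutoff_deriv e 1 z)\<^sup>2 + (cutoff_deriv e \<i> z)\<^sup>2
    \<le> 8 / e * indicator (cball 0 (sqrt (2 * e))) z + 40000 / 81 * indicator (cball 0 (1/4)) z"
proof -
  define T where "T = trapezoid' e (2 * e) (1/25) (1/16) ((norm z)\<^sup>2)"
  have "(cutoff_deriv e 1 z)\<^sup>2 + (cutoff_deriv e \<i> z)\<^sup>2 = 4 * ((Re z)\<^sup>2 + (Im z)\<^sup>2) * T\<^sup>2"
    unfolding cutoff_deriv_def T_def[symmetric]
    by (simp add: inner_complex_def power_mult_distrib algebra_simps)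
  also have "\<dots> = 4 * (norm z)\<^sup>2 * (trapezoid' e (2 * e) (1/25) (1/16) ((norm z)\<^sup>2))\<^sup>2"
    by (simp add: T_def cmod_power2)
  also have "\<dots> \<le> 8 / e * indicator (cball 0 (sqrt (2 * e))) z + 40000 / 81 * indicator (cball 0 (1/4)) z"
  proof -
    have pw: "4 * s * (trapezoid' e (2 * e) (1/25) (1/16) s)\<^sup>2
        \<le> (if s \<le> 2 * e then 8 / e else 0) + (if s \<le> 1/16 then 40000 / 81 else 0)" if "0 \<le> s" for s
      using that e by (auto simp: trapezoid'_def power2_eq_square field_simps)
        (rule add_increasing2, simp_all add: zero_le_mult_iff)
    have "z \<in> cball 0 (sqrt (2 * e)) \<longleftrightarrow> (norm z)\<^sup>2 \<le> 2 * e"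
      using abs_le_square_iff[of "norm z" "sqrt (2 * e)"] e by simp
    moreover have "z \<in> cball 0 (1/4) \<longleftrightarrow> (norm z)\<^sup>2 \<le> 1/16"
      using abs_le_square_iff[of "norm z" "1/4"] by (simp add: power2_eq_square)
    ultimately show ?thesis
      using pw[of "(norm z)\<^sup>2"] unfolding indicator_def by (simp split: if_splits)
  qed
  finally show ?thesis .
qed

lemma cutoff_energy:
  "integrable lborel (\<lambda>z. (cutoff_deriv e 1 z)\<^sup>2 + (cutoff_deriv e \<i> z)\<^sup>2)
   \<and> (\<integral>z. (cutoff_deriv e 1 z)\<^sup>2 + (cutoff_deriv e \<i> z)\<^sup>2 \<partial>lborel) \<le> (16 + 2500 / 81) * pi"
proof -
  define B where "B z = 8 / e * indicator (cball 0 (sqrt (2 * e))) z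
    + 40000 / 81 * indicator (cball 0 (1/4)) z" for z :: complex
  have ind: "integrable lborel (indicat_real (cball (0 :: complex) r))" for r
    by (intro integrable_real_indicator emeasure_bounded_finite) auto
  have B: "integrable lborel B"
    unfolding B_def[abs_def] by (simp add: ind)
  have le: "(cutoff_deriv e 1 z)\<^sup>2 + (cutoff_deriv e \<i> z)\<^sup>2 \<le> B z" for z
    unfolding B_def by (rule cutoff_gradient_sq_le)
  have int: "integrable lborel (\<lambda>z. (cutoff_deriv e 1 z)\<^sup>2 + (cutoff_deriv e \<i> z)\<^sup>2)"
  proof (rule Bochner_Integration.integrable_bound[OF B])
    show "(\<lambda>z. (cutoff_deriv e 1 z)\<^sup>2 + (cutoff_deriv e \<i> z)\<^sup>2) \<in> borel_measurable lborel"
      unfolding cutoff_deriv_def by measurable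
    show "AE z in lborel. norm ((cutoff_deriv e 1 z)\<^sup>2 + (cutoff_deriv e \<i> z)\<^sup>2) \<le> norm (B z)"
    proof (rule AE_I2)
      fix z
      have "norm ((cutoff_deriv e 1 z)\<^sup>2 + (cutoff_deriv e \<i> z)\<^sup>2)
          = (cutoff_deriv e 1 z)\<^sup>2 + (cutoff_deriv e \<i> z)\<^sup>2" by simp
      also have "\<dots> \<le> norm (B z)" using le[of z] by simp
      finally show "norm ((cutoff_deriv e 1 z)\<^sup>2 + (cutoff_deriv e \<i> z)\<^sup>2) \<le> norm (B z)" .
    qed
  qed
  have "(\<integral>z. (cutoff_deriv e 1 z)\<^sup>2 + (cutoff_deriv e \<i> z)\<^sup>2 \<partial>lborel) \<le> integral\<^sup>L lborel B"
    using int B le by (intro integral_mono) auto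
  also have "\<dots> = 8 / e * (pi * (sqrt (2 * e))\<^sup>2) + 40000 / 81 * (pi * (1/4)\<^sup>2)"
    unfolding B_def[abs_def] using e
    by (subst Bochner_Integration.integral_add)
       (auto simp: ind measure_cball_complex emeasure_bounded_finite)
  also have "\<dots> = (16 + 2500 / 81) * pi"
    using e by (simp add: power2_eq_square field_simps)
  finally show ?thesis using int by simp
qed

lemma cutoff_deriv_bound:
  assumes "norm d = 1"
  shows "\<bar>cutoff_deriv e d z\<bar> \<le> 1 / e + 400 / 9"
proof (cases "z \<in> cball 0 (1/4) - ball 0 (sqrt e)")
  case True
  have "\<bar>d \<bullet> z\<bar> \<le> norm d * norm z" by (rule Cauchy_Schwarz_ineq2)
  moreover have "norm z \<le> 1/4" using True by simp
  ultimately have "2 * \<bar>d \<bullet> z\<bar> \<le> 1" using assms by simp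
  moreover have "\<bar>trapezoid' e (2 * e) (1/25) (1/16) s\<bar> \<le> 1 / e + 400 / 9" for s
    using e by (simp add: trapezoid'_def)
  ultimately have "\<bar>trapezoid' e (2 * e) (1/25) (1/16) ((norm z)\<^sup>2)\<bar> * (2 * \<bar>d \<bullet> z\<bar>)
      \<le> (1 / e + 400 / 9) * 1"
    using e by (intro mult_mono) auto
  then show ?thesis by (simp add: cutoff_deriv_def abs_mult mult.assoc)
next
  case False
  then show ?thesis using e cutoff_vanishes(2)[OF False, of d] by simp
qed

lemma continuous_on_mult_cutoff:
  assumes f: "continuous_on (ball 0 (1/2) - {0}) f"
  shows "continuous_on UNIV (\<lambda>z. f z * cutoff e z)"
proof -
  define A where "A = cball 0 (1/4) - ball (0 :: complex) (sqrt e)"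
  have "continuous_on ((ball 0 (1/2) - {0}) \<union> - A) (\<lambda>z. f z * cutoff e z)"
  proof (rule continuous_on_open_Un)
    show "continuous_on (ball 0 (1/2) - {0}) (\<lambda>z. f z * cutoff e z)"
      using f continuous_on_cutoff by (intro continuous_intros)
    have "continuous_on (- A) (\<lambda>z. 0 :: real)" by simp
    then show "continuous_on (- A) (\<lambda>z. f z * cutoff e z)"
      by (rule continuous_on_cong[THEN iffD1, rotated 2]) (auto simp: A_def cutoff_vanishes)
    show "open (ball 0 (1/2) - {0 :: complex})" by auto
    show "open (- A)"
      unfolding A_def by (intro open_Compl compact_imp_closed compact_cutoff_support)
  qed
  moreover have "(ball 0 (1/2) - {0}) \<union> - A = UNIV"
    using cutoff_support_subset by (auto simp: A_def)
  ultimately show ?thesis by simp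
qed

lemma integrable_mult_cutoff:
  assumes f: "continuous_on (ball 0 (1/2) - {0}) f"
  shows "integrable lborel (\<lambda>z. f z * cutoff e z)"
proof -
  define A where "A = cball 0 (1/4) - ball (0 :: complex) (sqrt e)"
  have int: "integrable lborel (\<lambda>z. indicator A z *\<^sub>R (f z * cutoff e z))"
    unfolding A_def
    by (rule borel_integrable_compact[OF compact_cutoff_support])
       (rule continuous_on_subset[OF continuous_on_mult_cutoff[OF f]], simp)
  have eq: "indicator A z *\<^sub>R (f z * cutoff e z) = f z * cutoff e z" for z
    by (cases "z \<in> A") (simp_all add: A_def cutoff_vanishes)
  show ?thesis
    by (rule Bochner_Integration.integrable_cong[THEN iffD1, OF refl _ int]) (rule eq)
qed

lemma integrable_mult_cutoff_deriv:
  assumes f: "continuous_on (ball 0 (1/2) - {0}) f" and d: "norm d = 1"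
  shows "integrable lborel (\<lambda>z. f z * cutoff e z * cutoff_deriv e d z)"
  by (rule integrable_mult_bounded[OF integrable_mult_cutoff[OF f] _ cutoff_deriv_bound[OF d]])
     (simp add: cutoff_deriv_def)

end

section \<open>Solutions of Liouville's equation with a cusp at the origin\<close>

locale liouville_cusp =
  fixes u v :: "complex \<Rightarrow> real"
  assumes smooth: "smooth_on (ball 0 (1/2) - {0}) u"
    and liouville: "\<And>z. z \<in> ball 0 (1/2) - {0} \<Longrightarrow> laplacian u z = exp (2 * u z)"
    and v_eq: "\<And>z. z \<in> ball 0 (1/2) - {0} \<Longrightarrow> v z = u z + ln (norm z) + ln (- ln (norm z))"
    and continuous_v: "continuous_on (ball 0 (1/2)) v"
begin

lemma norm_sq_bounds: "z \<in> ball 0 (1/2) - {0} \<Longrightarrow> 0 < (norm z)\<^sup>2 \<and> (norm z)\<^sup>2 < 1"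
  by (auto simp: power_less_one_iff)

lemma v_eq_cusp_profile:
  assumes z: "z \<in> ball 0 (1/2) - {0}"
  shows "v z = u z + cusp_profile ((norm z)\<^sup>2)"
proof -
  have "0 < norm z" using z by simp
  then have "ln ((norm z)\<^sup>2) = 2 * ln (norm z)" by (simp add: ln_realpow)
  then show ?thesis using v_eq[OF z] by (simp add: cusp_profile_def)
qed

lemma differentiable_u:
  "d \<in> {1, \<i>} \<Longrightarrow> z \<in> ball 0 (1/2) - {0} \<Longrightarrow> (dir_deriv d ^^ n) u differentiable (at z)"
  by (rule smooth_on_differentiable_dir_deriv[OF smooth]) auto

definition v_deriv :: "complex \<Rightarrow> complex \<Rightarrow> real" where
  "v_deriv d z = dir_deriv d u z + 2 * (d \<bullet> z) * cusp_profile' ((norm z)\<^sup>2)"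

definition v_deriv2 :: "complex \<Rightarrow> complex \<Rightarrow> real" where
  "v_deriv2 d z = dir_deriv d (dir_deriv d u) z
     + 2 * cusp_profile' ((norm z)\<^sup>2) + 4 * (d \<bullet> z)\<^sup>2 * cusp_profile'' ((norm z)\<^sup>2)"

lemma has_real_derivative_v_line:
  assumes d: "d \<in> {1, \<i>}" and w: "z + d * of_real t0 \<in> ball 0 (1/2) - {0}"
  shows "((\<lambda>t. v (z + d * of_real t)) has_real_derivative v_deriv d (z + d * of_real t0)) (at t0)"
proof -
  have unit: "norm d = 1" using d by auto
  have "((\<lambda>t. cusp_profile ((norm (z + d * of_real t))\<^sup>2)) has_real_derivative
      cusp_profile' ((norm (z + d * of_real t0))\<^sup>2) * (2 * (d \<bullet> (z + d * of_real t0)))) (at t0)"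
    using norm_sq_bounds[OF w]
    by (intro DERIV_chain2[OF has_real_derivative_cusp_profile has_real_derivative_norm_line_sq[OF unit]]) auto
  from DERIV_add[OF has_real_derivative_dir_deriv[OF differentiable_u[OF d w, of 0, simplified]] this]
  have "((\<lambda>t. u (z + d * of_real t) + cusp_profile ((norm (z + d * of_real t))\<^sup>2)) has_real_derivative
      v_deriv d (z + d * of_real t0)) (at t0)"
    by (rule DERIV_cong) (simp add: v_deriv_def)
  then show ?thesis
    by (rule has_field_derivative_transform_within_open[OF _ open_line_preimage[of "ball 0 (1/2) - {0}"]])
       (use w v_eq_cusp_profile in auto)
qed

lemma has_real_derivative_v_deriv_line:
  assumes d: "d \<in> {1, \<i>}" and w: "z + d * of_real t0 \<in> ball 0 (1/2) - {0}"
  shows "((\<lambda>t. v_deriv d (z + d * of_real t)) has_real_derivative v_deriv2 d (z + d * of_real t0)) (at t0)"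
proof -
  have unit: "norm d = 1" using d by auto
  have inner: "((\<lambda>t. d \<bullet> (z + d * of_real t)) has_real_derivative 1) (at t0)"
    unfolding inner_line unit by (auto intro!: derivative_eq_intros)
  have profile': "((\<lambda>t. cusp_profile' ((norm (z + d * of_real t))\<^sup>2)) has_real_derivative
      cusp_profile'' ((norm (z + d * of_real t0))\<^sup>2) * (2 * (d \<bullet> (z + d * of_real t0)))) (at t0)"
    using norm_sq_bounds[OF w]
    by (intro DERIV_chain2[OF has_real_derivative_cusp_profile' has_real_derivative_norm_line_sq[OF unit]]) auto
  from DERIV_add[OF has_real_derivative_dir_deriv[OF differentiable_u[OF d w, of 1, simplified]]
      DERIV_mult[OF DERIV_cmult[OF inner, of 2] profile']]
  show ?thesis unfolding v_deriv_def
    by (rule DERIV_cong) (simp add: v_deriv2_def power2_eq_square algebra_simps)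
qed

lemma dir_deriv_v: "d \<in> {1, \<i>} \<Longrightarrow> z \<in> ball 0 (1/2) - {0} \<Longrightarrow> dir_deriv d v z = v_deriv d z"
  using dir_deriv_eqI[OF has_real_derivative_v_line[of d z 0]] by simp

lemma laplacian_v:
  assumes z: "z \<in> ball 0 (1/2) - {0}"
  shows "v_deriv2 1 z + v_deriv2 \<i> z = exp (- 2 * cusp_profile ((norm z)\<^sup>2)) * (exp (2 * v z) - 1)"
proof -
  define s where "s = (norm z)\<^sup>2"
  have s: "0 < s" "s < 1" using norm_sq_bounds[OF z] by (auto simp: s_def)
  have "v_deriv2 1 z + v_deriv2 \<i> z = laplacian u z + 4 * (cusp_profile' s + s * cusp_profile'' s)"
    by (simp add: v_deriv2_def laplacian_def px_eq_dir_deriv py_eq_dir_deriv inner_complex_def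
        s_def cmod_power2 algebra_simps)
  also have "\<dots> = exp (2 * u z) - exp (- 2 * cusp_profile s)"
    using liouville[OF z] cusp_profile_equation[OF s] by simp
  also have "\<dots> = exp (- 2 * cusp_profile s) * (exp (2 * v z) - 1)"
    by (simp add: v_eq_cusp_profile[OF z] s_def right_diff_distrib exp_add[symmetric] algebra_simps)
  finally show ?thesis by (simp add: s_def)
qed

lemma v_mult_laplacian_v_nonneg:
  assumes z: "z \<in> ball 0 (1/2) - {0}"
  shows "0 \<le> v z * (v_deriv2 1 z + v_deriv2 \<i> z)"
proof -
  have "0 \<le> v z * (exp (2 * v z) - 1)"
    by (cases "v z \<ge> 0") (auto simp: mult_nonpos_nonpos)
  then show ?thesis
    unfolding laplacian_v[OF z] by (simp add: mult.left_commute[of "v z"])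
qed

lemma continuous_on_cusp_profile':
  "continuous_on (ball 0 (1/2) - {0}) (\<lambda>z. cusp_profile' ((norm z)\<^sup>2))"
  "continuous_on (ball 0 (1/2) - {0}) (\<lambda>z. cusp_profile'' ((norm z)\<^sup>2))"
  unfolding cusp_profile'_def cusp_profile''_def
  by (intro continuous_intros; use norm_sq_bounds in fastforce)+

lemma continuous_on_v_derivs:
  assumes "d \<in> {1, \<i>}"
  shows "continuous_on (ball 0 (1/2) - {0}) v"
    and "continuous_on (ball 0 (1/2) - {0}) (v_deriv d)"
    and "continuous_on (ball 0 (1/2) - {0}) (v_deriv2 d)"
proof -
  have u: "continuous_on (ball 0 (1/2) - {0}) ((dir_deriv d ^^ n) u)" for n
    using differentiable_u[OF assms] by (blast intro: continuous_at_imp_continuous_on differentiable_imp_continuous_within)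
  show "continuous_on (ball 0 (1/2) - {0}) v" by (rule continuous_on_subset[OF continuous_v]) auto
  show "continuous_on (ball 0 (1/2) - {0}) (v_deriv d)"
    unfolding v_deriv_def[abs_def] using u[of 1] continuous_on_cusp_profile'
    by (auto intro!: continuous_intros)
  show "continuous_on (ball 0 (1/2) - {0}) (v_deriv2 d)"
    unfolding v_deriv2_def[abs_def] using u[of 2] continuous_on_cusp_profile'
    by (auto intro!: continuous_intros simp: numeral_2_eq_2)
qed

text \<open>\<open>flux_deriv d e\<close> is the derivative in direction \<open>d\<close> of \<open>\<rho>\<^sup>2 v \<partial>\<^sub>d v\<close> with
  \<open>\<rho> = cutoff e\<close>; that product has compact support in the punctured disc, so its derivative
  integrates to zero along lines.\<close>
definition flux_deriv :: "complex \<Rightarrow> real \<Rightarrow> complex \<Rightarrow> real" where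
  "flux_deriv d e z = (v_deriv2 d z * v z + (v_deriv d z)\<^sup>2) * (cutoff e z)\<^sup>2
     + 2 * v z * v_deriv d z * cutoff e z * cutoff_deriv e d z"

context
  fixes e :: real
  assumes e: "0 < e" "2 * e \<le> 1/25"
begin

lemma integrable_flux_deriv:
  assumes d: "d \<in> {1, \<i>}"
  shows "integrable lborel (flux_deriv d e)"
proof -
  note cont = continuous_on_v_derivs[OF d]
  have "integrable lborel (\<lambda>z. ((v_deriv2 d z * v z + (v_deriv d z)\<^sup>2) * cutoff e z) * cutoff e z)"
    using cont continuous_on_cutoff[OF e]
    by (intro integrable_mult_cutoff[OF e] continuous_intros)
  moreover have "integrable lborel (\<lambda>z. 2 * v z * v_deriv d z * cutoff e z * cutoff_deriv e d z)"
    using cont d by (intro integrable_mult_cutoff_deriv[OF e] continuous_intros) auto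
  ultimately show ?thesis
    unfolding flux_deriv_def[abs_def] by (simp add: power2_eq_square mult.assoc)
qed

lemma has_real_derivative_flux_line:
  assumes d: "d \<in> {1, \<i>}" and w: "z + d * of_real t \<in> ball 0 (1/2) - {0}"
    and s: "(norm (z + d * of_real t))\<^sup>2 \<notin> {e, 2 * e, 1/25, 1/16}"
  shows "((\<lambda>t. v_deriv d (z + d * of_real t) * v (z + d * of_real t)
      * cutoff e (z + d * of_real t) * cutoff e (z + d * of_real t))
    has_real_derivative flux_deriv d e (z + d * of_real t)) (at t)"
proof -
  have unit: "norm d = 1" using d by auto
  note \<rho> = has_real_derivative_cutoff_line[OF e unit s]
  from DERIV_mult[OF DERIV_mult[OF DERIV_mult[OF has_real_derivative_v_deriv_line[OF d w]
      has_real_derivative_v_line[OF d w]] \<rho>] \<rho>]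
  show ?thesis
    by (rule DERIV_cong) (simp add: flux_deriv_def power2_eq_square algebra_simps)
qed

lemma integral_flux_deriv_eq_0:
  assumes d: "d \<in> {1, \<i>}"
  shows "integral\<^sup>L lborel (flux_deriv d e) = 0"
proof -
  have unit: "norm d = 1" using d by auto
  define W where "W z = v_deriv d z * v z * cutoff e z * cutoff e z" for z
  have W_cont: "continuous_on UNIV W"
    unfolding W_def using continuous_on_v_derivs[OF d] continuous_on_cutoff[OF e]
    by (intro continuous_on_mult_cutoff[OF e] continuous_intros)
  have far: "W z = 0 \<and> flux_deriv d e z = 0" if "1/4 < norm z" for z
    using that cutoff_vanishes[OF e, of z] by (simp add: W_def flux_deriv_def)
  show ?thesis
  proof (rule integral_eq_0_if_derivative_along_lines[OF d integrable_flux_deriv[OF d], where W=W])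
    show "W z = 0 \<and> flux_deriv d e z = 0" if "1 \<le> norm z" for z
      using that far by simp
    fix c assume c: "c \<bullet> d = 0" "c \<noteq> 0"
    let ?S = "{t. (norm c)\<^sup>2 + t\<^sup>2 \<in> {e, 2 * e, 1/25, 1/16}}"
    have "((\<lambda>t. W (c + d * of_real t)) has_real_derivative flux_deriv d e (c + d * of_real t)) (at t)"
      if t: "t \<notin> ?S" for t
    proof (cases "c + d * of_real t \<in> ball 0 (1/2) - {0}")
      case True
      have "(norm (c + d * of_real t))\<^sup>2 \<notin> {e, 2 * e, 1/25, 1/16}"
        using t norm_orthogonal_line_sq[OF c(1) unit] by simp
      from has_real_derivative_flux_line[OF d True this] show ?thesis by (simp add: W_def)
    next
      case False
      have "c + d * of_real t \<noteq> 0"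
        using norm_orthogonal_line_sq[OF c(1) unit, of t] c(2) by auto
      with False have "c + d * of_real t \<in> {z. 1/4 < norm z}" by auto
      moreover have "open {z :: complex. 1/4 < norm z}" by (intro open_Collect_less continuous_intros)
      ultimately show ?thesis
        using has_real_derivative_line_if_locally_0[of "{z. 1/4 < norm z}" c d t W] far by auto
    qed
    then show "\<exists>S. finite S \<and> continuous_on UNIV (\<lambda>t. W (c + d * of_real t))
      \<and> (\<forall>t. t \<notin> S \<longrightarrow> ((\<lambda>t. W (c + d * of_real t)) has_real_derivative flux_deriv d e (c + d * of_real t)) (at t))"
      using finite_preimage_plus_square[of "{e, 2 * e, 1/25, 1/16}" "(norm c)\<^sup>2"]
        continuous_on_compose2[OF W_cont continuous_on_line[of UNIV c d]]
      by blast
  qed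
qed

lemma integrable_energy_terms:
  shows "integrable lborel (\<lambda>z. ((v_deriv 1 z)\<^sup>2 + (v_deriv \<i> z)\<^sup>2) * (cutoff e z)\<^sup>2)"
    and "integrable lborel (\<lambda>z. v z * (v_deriv2 1 z + v_deriv2 \<i> z) * (cutoff e z)\<^sup>2)"
    and "integrable lborel (\<lambda>z. 2 * v z * cutoff e z
      * (v_deriv 1 z * cutoff_deriv e 1 z + v_deriv \<i> z * cutoff_deriv e \<i> z))"
proof -
  note cont1 = continuous_on_v_derivs[of 1] and cont\<i> = continuous_on_v_derivs[of \<i>]
  note cutoff_cont = continuous_on_cutoff[OF e]
  show "integrable lborel (\<lambda>z. ((v_deriv 1 z)\<^sup>2 + (v_deriv \<i> z)\<^sup>2) * (cutoff e z)\<^sup>2)"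
    using integrable_mult_cutoff[OF e, of "\<lambda>z. ((v_deriv 1 z)\<^sup>2 + (v_deriv \<i> z)\<^sup>2) * cutoff e z"]
      cont1 cont\<i> cutoff_cont
    by (simp add: power2_eq_square mult.assoc continuous_intros)
  show "integrable lborel (\<lambda>z. v z * (v_deriv2 1 z + v_deriv2 \<i> z) * (cutoff e z)\<^sup>2)"
    using integrable_mult_cutoff[OF e, of "\<lambda>z. v z * (v_deriv2 1 z + v_deriv2 \<i> z) * cutoff e z"]
      cont1 cont\<i> cutoff_cont
    by (simp add: power2_eq_square mult.assoc continuous_intros)
  have "integrable lborel (\<lambda>z. 2 * v z * v_deriv d z * cutoff e z * cutoff_deriv e d z)"
    if "d \<in> {1, \<i>}" for d
    using continuous_on_v_derivs[OF that] that
    by (intro integrable_mult_cutoff_deriv[OF e] continuous_intros) auto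
  then show "integrable lborel (\<lambda>z. 2 * v z * cutoff e z
      * (v_deriv 1 z * cutoff_deriv e 1 z + v_deriv \<i> z * cutoff_deriv e \<i> z))"
    by (simp add: algebra_simps)
qed

text \<open>The integrated form of \<open>div (\<rho>\<^sup>2 v \<nabla>v) = \<rho>\<^sup>2 v \<Delta>v + \<rho>\<^sup>2 \<bar>\<nabla>v\<bar>\<^sup>2 + 2 \<rho> v \<nabla>\<rho>\<cdot>\<nabla>v\<close>.\<close>
lemma energy_identity:
  "(\<integral>z. v z * (v_deriv2 1 z + v_deriv2 \<i> z) * (cutoff e z)\<^sup>2 \<partial>lborel)
   + (\<integral>z. ((v_deriv 1 z)\<^sup>2 + (v_deriv \<i> z)\<^sup>2) * (cutoff e z)\<^sup>2 \<partial>lborel)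
   + (\<integral>z. 2 * v z * cutoff e z
        * (v_deriv 1 z * cutoff_deriv e 1 z + v_deriv \<i> z * cutoff_deriv e \<i> z) \<partial>lborel) = 0"
proof -
  have "flux_deriv 1 e z + flux_deriv \<i> e z
      = v z * (v_deriv2 1 z + v_deriv2 \<i> z) * (cutoff e z)\<^sup>2
        + ((v_deriv 1 z)\<^sup>2 + (v_deriv \<i> z)\<^sup>2) * (cutoff e z)\<^sup>2
        + 2 * v z * cutoff e z * (v_deriv 1 z * cutoff_deriv e 1 z + v_deriv \<i> z * cutoff_deriv e \<i> z)"
    for z by (simp add: flux_deriv_def algebra_simps)
  then have "integral\<^sup>L lborel (flux_deriv 1 e) + integral\<^sup>L lborel (flux_deriv \<i> e)
      = (\<integral>z. v z * (v_deriv2 1 z + v_deriv2 \<i> z) * (cutoff e z)\<^sup>2 \<partial>lborel)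
        + (\<integral>z. ((v_deriv 1 z)\<^sup>2 + (v_deriv \<i> z)\<^sup>2) * (cutoff e z)\<^sup>2 \<partial>lborel)
        + (\<integral>z. 2 * v z * cutoff e z
            * (v_deriv 1 z * cutoff_deriv e 1 z + v_deriv \<i> z * cutoff_deriv e \<i> z) \<partial>lborel)"
    using integrable_energy_terms integrable_flux_deriv by (simp flip: Bochner_Integration.integral_add)
  then show ?thesis by (simp add: integral_flux_deriv_eq_0)
qed

lemma cross_term_bound:
  assumes M: "\<And>z. z \<in> cball 0 (1/4) \<Longrightarrow> \<bar>v z\<bar> \<le> M"
  shows "- (2 * v z * cutoff e z * (v_deriv 1 z * cutoff_deriv e 1 z + v_deriv \<i> z * cutoff_deriv e \<i> z))
    \<le> ((v_deriv 1 z)\<^sup>2 + (v_deriv \<i> z)\<^sup>2) * (cutoff e z)\<^sup>2 / 2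
      + 2 * M\<^sup>2 * ((cutoff_deriv e 1 z)\<^sup>2 + (cutoff_deriv e \<i> z)\<^sup>2)"
proof (cases "z \<in> cball 0 (1/4) - ball 0 (sqrt e)")
  case True
  then have "(v z)\<^sup>2 \<le> M\<^sup>2" using M[of z] by (simp add: abs_le_square_iff[symmetric])
  then have "2 * (v z)\<^sup>2 * ((cutoff_deriv e 1 z)\<^sup>2 + (cutoff_deriv e \<i> z)\<^sup>2)
      \<le> 2 * M\<^sup>2 * ((cutoff_deriv e 1 z)\<^sup>2 + (cutoff_deriv e \<i> z)\<^sup>2)"
    by (simp add: mult_right_mono)
  with young_cross_term[of "v z" "cutoff e z" "v_deriv 1 z" "cutoff_deriv e 1 z" "v_deriv \<i> z"
      "cutoff_deriv e \<i> z"]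
  show ?thesis by linarith
next
  case False
  then show ?thesis using cutoff_vanishes[OF e False] by simp
qed

lemma cutoff_energy_bound:
  assumes M: "\<And>z. z \<in> cball 0 (1/4) \<Longrightarrow> \<bar>v z\<bar> \<le> M"
  shows "integrable lborel (\<lambda>z. ((v_deriv 1 z)\<^sup>2 + (v_deriv \<i> z)\<^sup>2) * (cutoff e z)\<^sup>2)
    \<and> (\<integral>z. ((v_deriv 1 z)\<^sup>2 + (v_deriv \<i> z)\<^sup>2) * (cutoff e z)\<^sup>2 \<partial>lborel)
      \<le> 4 * M\<^sup>2 * ((16 + 2500 / 81) * pi)"
proof -
  define L where "L = (\<lambda>z. v z * (v_deriv2 1 z + v_deriv2 \<i> z) * (cutoff e z)\<^sup>2)"
  define Q where "Q = (\<lambda>z. ((v_deriv 1 z)\<^sup>2 + (v_deriv \<i> z)\<^sup>2) * (cutoff e z)\<^sup>2)"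
  define R where "R = (\<lambda>z. 2 * v z * cutoff e z
    * (v_deriv 1 z * cutoff_deriv e 1 z + v_deriv \<i> z * cutoff_deriv e \<i> z))"
  define G where "G = (\<lambda>z. (cutoff_deriv e 1 z)\<^sup>2 + (cutoff_deriv e \<i> z)\<^sup>2)"
  have iQ: "integrable lborel Q" and iR: "integrable lborel R"
    unfolding Q_def R_def by (fact integrable_energy_terms)+
  have iG: "integrable lborel G" and G_le: "integral\<^sup>L lborel G \<le> (16 + 2500 / 81) * pi"
    using cutoff_energy[OF e] by (simp_all add: G_def)
  have "0 \<le> integral\<^sup>L lborel L"
  proof (rule integral_nonneg_AE, rule AE_I2)
    fix z
    show "0 \<le> L z"
    proof (cases "z \<in> ball 0 (1/2) - {0}")
      case True
      then show ?thesis using v_mult_laplacian_v_nonneg by (simp add: L_def)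
    next
      case False
      then have "z \<notin> cball 0 (1/4) - ball 0 (sqrt e)" using cutoff_support_subset[OF e] by blast
      then show ?thesis using cutoff_vanishes(1)[OF e] by (simp add: L_def)
    qed
  qed
  moreover have "- R z \<le> Q z / 2 + 2 * M\<^sup>2 * G z" for z
    unfolding R_def Q_def G_def by (rule cross_term_bound[OF M])
  then have "- integral\<^sup>L lborel R \<le> integral\<^sup>L lborel Q / 2 + 2 * M\<^sup>2 * integral\<^sup>L lborel G"
    using integral_mono[OF integrable_minus[OF iR] _ , of "\<lambda>z. Q z / 2 + 2 * M\<^sup>2 * G z"] iQ iG by simp
  ultimately have "integral\<^sup>L lborel Q \<le> 4 * M\<^sup>2 * integral\<^sup>L lborel G"
    using energy_identity unfolding L_def Q_def R_def by linarith
  also have "\<dots> \<le> 4 * M\<^sup>2 * ((16 + 2500 / 81) * pi)"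
    using G_le by (intro mult_left_mono) auto
  finally show ?thesis using iQ by (simp add: Q_def)
qed

end

lemma set_integrable_gradient_v:
  "set_integrable lborel (ball 0 (1/5) - {0}) (\<lambda>z. (v_deriv 1 z)\<^sup>2 + (v_deriv \<i> z)\<^sup>2)"
proof -
  have "compact (v ` cball 0 (1/4))"
    by (rule compact_continuous_image[OF continuous_on_subset[OF continuous_v]]) auto
  then obtain M where "\<forall>x \<in> v ` cball 0 (1/4). norm x \<le> M"
    using compact_imp_bounded bounded_iff by metis
  then have M: "\<And>z. z \<in> cball 0 (1/4) \<Longrightarrow> \<bar>v z\<bar> \<le> M" by auto
  define e where "e n = inverse (real (Suc n)) / 50" for n
  have e: "0 < e n" "2 * e n \<le> 1/25" for n
    by (auto simp: e_def field_simps)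
  have e_lim: "e \<longlonglongrightarrow> 0"
    unfolding e_def[abs_def] using LIMSEQ_inverse_real_of_nat by (intro tendsto_divide_zero)
  show ?thesis
  proof (rule set_integrable_if_cutoff_integrals_bounded[where K = "4 * M\<^sup>2 * ((16 + 2500 / 81) * pi)"])
    show "set_borel_measurable lborel (ball 0 (1/5) - {0}) (\<lambda>z. (v_deriv 1 z)\<^sup>2 + (v_deriv \<i> z)\<^sup>2)"
    proof -
      have "continuous_on (ball 0 (1/2) - {0}) (\<lambda>z. (v_deriv 1 z)\<^sup>2 + (v_deriv \<i> z)\<^sup>2)"
        using continuous_on_v_derivs(2)[of 1] continuous_on_v_derivs(2)[of \<i>]
        by (auto intro!: continuous_intros)
      then have "continuous_on (ball 0 (1/5) - {0}) (\<lambda>z. (v_deriv 1 z)\<^sup>2 + (v_deriv \<i> z)\<^sup>2)"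
        by (rule continuous_on_subset) auto
      from set_measurable_continuous_on[OF _ this] show ?thesis
        by (simp add: set_borel_measurable_def)
    qed
    fix z :: complex assume z: "z \<in> ball 0 (1/5) - {0}"
    have le: "(norm z)\<^sup>2 \<le> 1/25"
      using power_mono[of "norm z" "1/5" 2] z by (simp add: power_divide)
    have pos: "0 < (norm z)\<^sup>2 / 2" using z by simp
    have "\<forall>\<^sub>F n in sequentially. ((v_deriv 1 z)\<^sup>2 + (v_deriv \<i> z)\<^sup>2) * (cutoff (e n) z)\<^sup>2
        = (v_deriv 1 z)\<^sup>2 + (v_deriv \<i> z)\<^sup>2"
    proof (rule eventually_mono[OF order_tendstoD(2)[OF e_lim pos]])
      fix n assume "e n < (norm z)\<^sup>2 / 2"
      then have "cutoff (e n) z = 1" using le by (intro cutoff_eq_1[OF e]) auto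
      then show "((v_deriv 1 z)\<^sup>2 + (v_deriv \<i> z)\<^sup>2) * (cutoff (e n) z)\<^sup>2
          = (v_deriv 1 z)\<^sup>2 + (v_deriv \<i> z)\<^sup>2" by simp
    qed
    then show "(\<lambda>n. ((v_deriv 1 z)\<^sup>2 + (v_deriv \<i> z)\<^sup>2) * (cutoff (e n) z)\<^sup>2)
        \<longlonglongrightarrow> (v_deriv 1 z)\<^sup>2 + (v_deriv \<i> z)\<^sup>2"
      by (rule tendsto_eventually)
  qed (use cutoff_energy_bound[OF e M] in auto)
qed

lemma set_integrable_weak_derivative_terms:
  assumes d: "d \<in> {1, \<i>}" and \<phi>: "test_fun (ball 0 (1/5)) \<phi>"
  shows "set_integrable lborel (ball 0 (1/5) - {0}) (\<lambda>z. dir_deriv d v z * \<phi> z)"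
    and "set_integrable lborel (ball 0 (1/5)) (\<lambda>z. v z * dir_deriv d \<phi> z)"
proof -
  note cont_\<phi> = test_fun_continuous[OF \<phi> d]
  show "set_integrable lborel (ball 0 (1/5) - {0}) (\<lambda>z. dir_deriv d v z * \<phi> z)"
  proof (rule set_integrable_mult_square_bound[OF set_integrable_gradient_v])
    have "set_integrable lborel (cball 0 (1/5)) (\<lambda>z. (\<phi> z)\<^sup>2)"
      unfolding set_integrable_def using cont_\<phi>
      by (intro borel_integrable_compact) (auto intro!: continuous_intros elim: continuous_on_subset)
    then show "set_integrable lborel (ball 0 (1/5) - {0}) (\<lambda>z. (\<phi> z)\<^sup>2)"
      by (rule set_integrable_subset) auto
    have "continuous_on (ball 0 (1/5) - {0}) (\<lambda>z. v_deriv d z * \<phi> z)"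
      using continuous_on_v_derivs(2)[OF d] cont_\<phi>
      by (auto intro!: continuous_intros elim: continuous_on_subset)
    then have "continuous_on (ball 0 (1/5) - {0}) (\<lambda>z. dir_deriv d v z * \<phi> z)"
      by (rule continuous_on_cong[THEN iffD1, rotated 2]) (simp_all add: dir_deriv_v[OF d])
    from set_measurable_continuous_on[OF _ this]
    show "set_borel_measurable lborel (ball 0 (1/5) - {0}) (\<lambda>z. dir_deriv d v z * \<phi> z)"
      by (simp add: set_borel_measurable_def)
    show "(dir_deriv d v z)\<^sup>2 \<le> (v_deriv 1 z)\<^sup>2 + (v_deriv \<i> z)\<^sup>2" if "z \<in> ball 0 (1/5) - {0}" for z
      using d dir_deriv_v[OF d, of z] that by auto
  qed
  have "set_integrable lborel (cball 0 (1/5)) (\<lambda>z. v z * dir_deriv d \<phi> z)"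
    unfolding set_integrable_def using cont_\<phi> continuous_v
    by (intro borel_integrable_compact) (auto intro!: continuous_intros elim: continuous_on_subset)
  then show "set_integrable lborel (ball 0 (1/5)) (\<lambda>z. v z * dir_deriv d \<phi> z)"
    by (rule set_integrable_subset) auto
qed

lemma has_real_derivative_v_mult_line:
  assumes d: "d \<in> {1, \<i>}" and f: "f differentiable (at (z + d * of_real t))"
    and w: "z + d * of_real t \<in> ball 0 (1/2) - {0}"
  shows "((\<lambda>t. v (z + d * of_real t) * f (z + d * of_real t)) has_real_derivative
    dir_deriv d v (z + d * of_real t) * f (z + d * of_real t)
    + v (z + d * of_real t) * dir_deriv d f (z + d * of_real t)) (at t)"
  using DERIV_mult[OF has_real_derivative_v_line[OF d w] has_real_derivative_dir_deriv[OF f]]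
  by (simp add: dir_deriv_v[OF d w] mult.commute)

text \<open>Integration by parts along lines in direction \<open>d\<close>; these avoid the singularity at the
  origin for all but one offset.\<close>
lemma weak_derivative_v:
  assumes d: "d \<in> {1, \<i>}" and \<phi>: "test_fun (ball 0 (1/5)) \<phi>"
  shows "(LINT z:ball 0 (1/5)|lborel. v z * dir_deriv d \<phi> z)
    = - (LINT z:ball 0 (1/5) - {0}|lborel. dir_deriv d v z * \<phi> z)"
proof -
  define K where "K = closure {z. \<phi> z \<noteq> 0}"
  have K: "K \<subseteq> ball 0 (1/5)" using \<phi> by (simp add: test_fun_def K_def)
  note int = set_integrable_weak_derivative_terms[OF d \<phi>]
  define F where "F z = indicator (ball 0 (1/5) - {0}) z *\<^sub>R (dir_deriv d v z * \<phi> z)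
    + indicator (ball 0 (1/5)) z *\<^sub>R (v z * dir_deriv d \<phi> z)" for z
  define W where "W z = v z * \<phi> z" for z
  have F: "integrable lborel F"
    using int unfolding F_def[abs_def] set_integrable_def by simp
  have W_0: "W z = 0" if "z \<in> - K" for z
    using test_fun_vanishes(1)[of z \<phi>] that unfolding K_def by (simp add: W_def)
  have outside: "W z = 0 \<and> F z = 0" if "z \<notin> ball 0 (1/5)" for z
  proof -
    have "z \<in> - K" using that K by blast
    then show ?thesis using W_0 that by (simp add: F_def)
  qed
  have "integral\<^sup>L lborel F = 0"
  proof (rule integral_eq_0_if_derivative_along_lines[OF d F, where W=W])
    show "W z = 0 \<and> F z = 0" if "1 \<le> norm z" for z
      using that by (intro outside) simp
    fix c assume c: "c \<bullet> d = 0" "c \<noteq> 0"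
    have unit: "norm d = 1" using d by auto
    have deriv: "((\<lambda>t. W (c + d * of_real t)) has_real_derivative F (c + d * of_real t)) (at t)" for t
    proof (cases "c + d * of_real t \<in> ball 0 (1/5)")
      case True
      have "c + d * of_real t \<noteq> 0"
        using norm_orthogonal_line_sq[OF c(1) unit, of t] c(2) by auto
      with True have w: "c + d * of_real t \<in> ball 0 (1/2) - {0}" "c + d * of_real t \<in> ball 0 (1/5) - {0}"
        by auto
      from has_real_derivative_v_mult_line[OF d test_fun_differentiable(1)[OF \<phi> d] w(1)] w
      show ?thesis by (simp add: W_def F_def)
    next
      case False
      then have "c + d * of_real t \<in> - K" using K by auto
      moreover have "open (- K)" unfolding K_def by (rule open_Compl[OF closed_closure])
      ultimately show ?thesis
        using has_real_derivative_line_if_locally_0[of "- K" c d t W] W_0 outside[OF False] by auto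
    qed
    then have "continuous_on UNIV (\<lambda>t. W (c + d * of_real t))"
      by (intro continuous_at_imp_continuous_on ballI DERIV_isCont)
    with deriv show "\<exists>S. finite S \<and> continuous_on UNIV (\<lambda>t. W (c + d * of_real t))
      \<and> (\<forall>t. t \<notin> S \<longrightarrow> ((\<lambda>t. W (c + d * of_real t)) has_real_derivative F (c + d * of_real t)) (at t))"
      by (intro exI[of _ "{}"]) simp
  qed
  moreover have "integral\<^sup>L lborel F = (LINT z:ball 0 (1/5) - {0}|lborel. dir_deriv d v z * \<phi> z)
      + (LINT z:ball 0 (1/5)|lborel. v z * dir_deriv d \<phi> z)"
    using int unfolding F_def[abs_def] set_integrable_def set_lebesgue_integral_def
    by (rule Bochner_Integration.integral_add)
  ultimately show ?thesis by linarith
qed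

end

theorem lemma2p3:
  fixes u :: "complex \<Rightarrow> real" and v :: "complex \<Rightarrow> real"
  assumes smooth: "smooth_on (ball 0 (1/2) - {0}) u"
    and eq: "\<And>z. z \<in> ball 0 (1/2) - {0} \<Longrightarrow> laplacian u z = exp (2 * u z)"
    and v_def: "\<And>z. z \<in> ball 0 (1/2) - {0} \<Longrightarrow>
                  v z = u z + ln (norm z) + ln (- ln (norm z))"
    and v_cont: "continuous_on (ball 0 (1/2)) v"
  shows "set_integrable lborel (ball 0 (1/5) - {0}) (\<lambda>z. (px v z)\<^sup>2 + (py v z)\<^sup>2)
    \<and> (\<forall>\<phi>. test_fun (ball 0 (1/5)) \<phi> \<longrightarrow>
          set_integrable lborel (ball 0 (1/5) - {0}) (\<lambda>z. px v z * \<phi> z)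
        \<and> set_integrable lborel (ball 0 (1/5) - {0}) (\<lambda>z. py v z * \<phi> z)
        \<and> (LINT z:ball 0 (1/5)|lborel. v z * px \<phi> z)
            = - (LINT z:ball 0 (1/5) - {0}|lborel. px v z * \<phi> z)
        \<and> (LINT z:ball 0 (1/5)|lborel. v z * py \<phi> z)
            = - (LINT z:ball 0 (1/5) - {0}|lborel. py v z * \<phi> z))"
proof -
  interpret liouville_cusp u v
    using smooth eq v_def v_cont by unfold_locales
  have grad: "(px v z)\<^sup>2 + (py v z)\<^sup>2 = (v_deriv 1 z)\<^sup>2 + (v_deriv \<i> z)\<^sup>2"
    if "z \<in> ball 0 (1/5) - {0}" for z
  proof -
    have "z \<in> ball 0 (1/2) - {0}" using that by auto
    then show ?thesis
      using dir_deriv_v[of 1 z] dir_deriv_v[of \<i> z] by (simp add: px_eq_dir_deriv py_eq_dir_deriv)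
  qed
  show ?thesis
  proof (intro conjI allI impI)
    show "set_integrable lborel (ball 0 (1/5) - {0}) (\<lambda>z. (px v z)\<^sup>2 + (py v z)\<^sup>2)"
      by (rule set_integrable_cong[THEN iffD2, OF refl refl _ set_integrable_gradient_v]) (rule grad)
    fix \<phi> assume \<phi>: "test_fun (ball 0 (1/5)) \<phi>"
    show "set_integrable lborel (ball 0 (1/5) - {0}) (\<lambda>z. px v z * \<phi> z)"
      using set_integrable_weak_derivative_terms(1)[of 1, OF _ \<phi>] by (simp add: px_eq_dir_deriv)
    show "set_integrable lborel (ball 0 (1/5) - {0}) (\<lambda>z. py v z * \<phi> z)"
      using set_integrable_weak_derivative_terms(1)[of \<i>, OF _ \<phi>] by (simp add: py_eq_dir_deriv)
    show "(LINT z:ball 0 (1/5)|lborel. v z * px \<phi> z)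
        = - (LINT z:ball 0 (1/5) - {0}|lborel. px v z * \<phi> z)"
      using weak_derivative_v[of 1, OF _ \<phi>] by (simp add: px_eq_dir_deriv)
    show "(LINT z:ball 0 (1/5)|lborel. v z * py \<phi> z)
        = - (LINT z:ball 0 (1/5) - {0}|lborel. py v z * \<phi> z)"
      using weak_derivative_v[of \<i>, OF _ \<phi>] by (simp add: py_eq_dir_deriv)
  qed
qed

end
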